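(* Let $F$ be a field of characteristic zero, $G$ a group, $H$ an abelian group, $\beta$ a skew-symmetric bicharacter on $H$, $C$ an $H$-graded $\beta$-commutative algebra generating the variety of all $H$-graded $\beta$-commutative algebras, and $R$ any $G$-graded algebra. Let $\mathbf g=(g_1,\dots,g_n)\in G^n$, $\mathbf h=(h_1,\dots,h_n)\in H^n$ and let $f\in T_{G\times H}(R\otimes C)\cap P_{\mathbf g\times\mathbf h}$. Then there exists $f_0\in P_{\mathbf g}\cap T_G(R)$ such that $f=\phi_{\mathbf h}(f_0)$.
   Context: $H$ is written additively; $\beta:H\times H\to F^*$ satisfies $\beta(g+h,k)=\beta(g,k)\beta(h,k)$, $\beta(g,h+k)=\beta(g,h)\beta(g,k)$, $\beta(g,h)=\beta(h,g)^{-1}$. For homogeneous $a\in C_h,b\in C_k$, $[a,b]_\beta=ab-\beta(h,k)ba$; $C$ is $\beta$-commutative if $[a,b]_\beta=0$ for all $a,b$. $C$ generates the variety of all $H$-graded $\beta$-commutative algebras if its $H$-graded identities are exactly the $T_H$-ideal generated by $[x_{h,1},x_{k,2}]_\beta$, $h,k\in H$. $R\otimes C$ is $G\times H$-graded by $(R\otimes C)_{(g,h)}=R_g\otimes C_h$. $F\langle X|K\rangle$ denotes the free algebra on variables $x_{k,i}$ of degree $k\in K$, $i\ge1$; $T_K(\cdot)$ is the ideal of $K$-graded identities. For $\mathbf g\in G^n$, $P_{\mathbf g}$ is the span of $x_{g_{\sigma(1)},\sigma(1)}\cdots x_{g_{\sigma(n)},\sigma(n)}$, $\sigma\in S_n$;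 $P_{\mathbf g\times\mathbf h}$ is defined likewise with degrees $(g_i,h_i)$. Map $\zeta$: if $m=x_{(a_{\tau(1)},b_{\tau(1)}),\tau(1)}\cdots x_{(a_{\tau(k)},b_{\tau(k)}),\tau(k)}$ is a multilinear monomial in $F\langle X|G\times H\rangle$ in variables with indices $i_1<\dots<i_k$ ($\tau$ an ordering of these indices), let $\lambda\in F^*$ be such that $x_{b_{i_1},i_1}\cdots x_{b_{i_k},i_k}=\lambda\, x_{b_{\tau(1)},\tau(1)}\cdots x_{b_{\tau(k)},\tau(k)}$ in the free $H$-graded $\beta$-commutative algebra; set $\zeta(m)=\lambda m$. The linear map $\phi_{\mathbf h}$ on multilinear polynomials in $x_{a_1,1},\dots,x_{a_n,n}$ sends a monomial $x_{a_{\sigma(1)},\sigma(1)}\cdots x_{a_{\sigma(n)},\sigma(n)}$ to $\zeta(x_{(a_{\sigma(1)},h_{\sigma(1)}),\sigma(1)}\cdots x_{(a_{\sigma(n)},h_{\sigma(n)}),\sigma(n)})$. *)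

theory Defs
  imports Main "HOL.Vector_Spaces" "HOL-Library.Function_Algebras" "HOL-Combinatorics.Permutations"
begin

definition fsupp :: "('a \<Rightarrow> 'f::zero) \<Rightarrow> 'a set" where
  "fsupp p = {x. p x \<noteq> 0}"

definition smulf :: "'f::times \<Rightarrow> ('a \<Rightarrow> 'f) \<Rightarrow> ('a \<Rightarrow> 'f)" where
  "smulf c p = (\<lambda>x. c * p x)"

text \<open>A polynomial is a finitely supported function from words to F; a word is a list of
  variables x_{k,i}, represented as pairs (k,i).\<close>

definition free_alg :: "(('k \<times> nat) list \<Rightarrow> 'f::zero) set" where
  "free_alg = {p. finite (fsupp p) \<and> p [] = 0}"

definition monw :: "'w \<Rightarrow> ('w \<Rightarrow> 'f::zero_neq_one)" where
  "monw w = (\<lambda>u. if u = w then 1 else 0)"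

definition pmul :: "(('k \<times> nat) list \<Rightarrow> 'f::comm_ring) \<Rightarrow> (('k \<times> nat) list \<Rightarrow> 'f)
    \<Rightarrow> (('k \<times> nat) list \<Rightarrow> 'f)" where
  "pmul p q = (\<lambda>w. \<Sum>i\<le>length w. p (take i w) * q (drop i w))"

fun gwprod :: "('a \<Rightarrow> 'a \<Rightarrow> 'a) \<Rightarrow> ('v \<Rightarrow> 'a) \<Rightarrow> 'v list \<Rightarrow> 'a::zero" where
  "gwprod m s [] = 0"
| "gwprod m s [x] = s x"
| "gwprod m s (x # y # xs) = m (s x) (gwprod m s (y # xs))"

definition geval :: "('a \<Rightarrow> 'a \<Rightarrow> 'a) \<Rightarrow> ('f \<Rightarrow> 'a \<Rightarrow> 'a) \<Rightarrow> ('v \<Rightarrow> 'a)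
    \<Rightarrow> ('v list \<Rightarrow> 'f::zero) \<Rightarrow> 'a::comm_monoid_add" where
  "geval m sc s p = (\<Sum>w\<in>fsupp p. sc (p w) (gwprod m s w))"

definition graded_algebra :: "('f::field \<Rightarrow> 'a::ring \<Rightarrow> 'a) \<Rightarrow> ('k::monoid_add \<Rightarrow> 'a set) \<Rightarrow> bool" where
  "graded_algebra sc A \<longleftrightarrow>
     vector_space sc
   \<and> (\<forall>c x y. sc c (x * y) = sc c x * y \<and> sc c (x * y) = x * sc c y)
   \<and> (\<forall>k. 0 \<in> A k \<and> (\<forall>x\<in>A k. \<forall>y\<in>A k. x + y \<in> A k) \<and> (\<forall>c. \<forall>x\<in>A k. sc c x \<in> A k))
   \<and> (\<forall>k l. \<forall>x\<in>A k. \<forall>y\<in>A l. x * y \<in> A (k + l))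
   \<and> (\<forall>x. \<exists>!d. finite {k. d k \<noteq> 0} \<and> (\<forall>k. d k \<in> A k) \<and> x = (\<Sum>k\<in>{k. d k \<noteq> 0}. d k))"

definition graded_subst :: "('k \<Rightarrow> 'a set) \<Rightarrow> ('k \<times> nat \<Rightarrow> 'a) \<Rightarrow> bool" where
  "graded_subst A s \<longleftrightarrow> (\<forall>k i. s (k, i) \<in> A k)"

definition TG :: "('f::field \<Rightarrow> 'a::ring \<Rightarrow> 'a) \<Rightarrow> ('k \<Rightarrow> 'a set) \<Rightarrow> (('k \<times> nat) list \<Rightarrow> 'f) set" where
  "TG sc A = {p \<in> free_alg. \<forall>s. graded_subst A s \<longrightarrow> geval (*) sc s p = 0}"

definition bicharacter :: "('h::ab_group_add \<Rightarrow> 'h \<Rightarrow> 'f::field) \<Rightarrow> bool" where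
  "bicharacter \<beta> \<longleftrightarrow> (\<forall>g h. \<beta> g h \<noteq> 0)
     \<and> (\<forall>g h k. \<beta> (g + h) k = \<beta> g k * \<beta> h k)
     \<and> (\<forall>g h k. \<beta> g (h + k) = \<beta> g h * \<beta> g k)
     \<and> (\<forall>g h. \<beta> g h = inverse (\<beta> h g))"

definition beta_commutative :: "('h \<Rightarrow> 'h \<Rightarrow> 'f::field) \<Rightarrow> ('f \<Rightarrow> 'a::ring \<Rightarrow> 'a) \<Rightarrow> ('h \<Rightarrow> 'a set) \<Rightarrow> bool" where
  "beta_commutative \<beta> sc A \<longleftrightarrow> (\<forall>h k. \<forall>a\<in>A h. \<forall>b\<in>A k. a * b - sc (\<beta> h k) (b * a) = 0)"

definition word_deg :: "('k::monoid_add \<times> nat) list \<Rightarrow> 'k" where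
  "word_deg w = sum_list (map fst w)"

definition homog :: "'k::monoid_add \<Rightarrow> (('k \<times> nat) list \<Rightarrow> 'f::zero) set" where
  "homog k = {p \<in> free_alg. \<forall>w\<in>fsupp p. word_deg w = k}"

text \<open>The T_K-ideal generated by a set S of polynomials: the least ideal of the free
  algebra containing S and stable under all graded endomorphisms.\<close>
inductive_set Tideal :: "(('k::monoid_add \<times> nat) list \<Rightarrow> 'f::field) set \<Rightarrow> (('k \<times> nat) list \<Rightarrow> 'f) set"
  for S where
  gen: "p \<in> S \<Longrightarrow> p \<in> Tideal S"
| zero: "0 \<in> Tideal S"
| add: "p \<in> Tideal S \<Longrightarrow> q \<in> Tideal S \<Longrightarrow> p + q \<in> Tideal S"
| smul: "p \<in> Tideal S \<Longrightarrow> smulf c p \<in> Tideal S"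
| mult_left: "p \<in> Tideal S \<Longrightarrow> q \<in> free_alg \<Longrightarrow> pmul q p \<in> Tideal S"
| mult_right: "p \<in> Tideal S \<Longrightarrow> q \<in> free_alg \<Longrightarrow> pmul p q \<in> Tideal S"
| endo: "p \<in> Tideal S \<Longrightarrow> (\<forall>k i. s (k, i) \<in> homog k) \<Longrightarrow> geval pmul smulf s p \<in> Tideal S"

definition beta_comm :: "('h \<Rightarrow> 'h \<Rightarrow> 'f::field) \<Rightarrow> 'h \<Rightarrow> 'h \<Rightarrow> (('h \<times> nat) list \<Rightarrow> 'f)" where
  "beta_comm \<beta> h k = monw [(h, 1), (k, 2)] - smulf (\<beta> h k) (monw [(k, 2), (h, 1)])"

definition beta_comm_Tideal :: "('h::ab_group_add \<Rightarrow> 'h \<Rightarrow> 'f::field) \<Rightarrow> (('h \<times> nat) list \<Rightarrow> 'f) set" where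
  "beta_comm_Tideal \<beta> = Tideal {beta_comm \<beta> h k | h k. True}"

definition generates_beta_variety :: "('h::ab_group_add \<Rightarrow> 'h \<Rightarrow> 'f::field) \<Rightarrow> ('f \<Rightarrow> 'c::ring \<Rightarrow> 'c)
    \<Rightarrow> ('h \<Rightarrow> 'c set) \<Rightarrow> bool" where
  "generates_beta_variety \<beta> sc C \<longleftrightarrow> TG sc C = beta_comm_Tideal \<beta>"

text \<open>R \<otimes> C is the free F-vector space on R \<times> C (finitely supported functions) modulo the
  subspace tens_rel of bilinearity relations. An element is represented by a finitely
  supported function; it is zero in R \<otimes> C iff it lies in tens_rel.\<close>

definition tpure :: "'r \<Rightarrow> 'c \<Rightarrow> ('r \<times> 'c \<Rightarrow> 'f::zero_neq_one)" where
  "tpure r c = monw (r, c)"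

inductive_set tens_rel :: "('f::field \<Rightarrow> 'r::ring \<Rightarrow> 'r) \<Rightarrow> ('f \<Rightarrow> 'c::ring \<Rightarrow> 'c) \<Rightarrow> ('r \<times> 'c \<Rightarrow> 'f) set"
  for sR sC where
  zero: "0 \<in> tens_rel sR sC"
| add: "x \<in> tens_rel sR sC \<Longrightarrow> y \<in> tens_rel sR sC \<Longrightarrow> x + y \<in> tens_rel sR sC"
| smul: "x \<in> tens_rel sR sC \<Longrightarrow> smulf a x \<in> tens_rel sR sC"
| addL: "tpure (r1 + r2) c - tpure r1 c - tpure r2 c \<in> tens_rel sR sC"
| addR: "tpure r (c1 + c2) - tpure r c1 - tpure r c2 \<in> tens_rel sR sC"
| smulL: "tpure (sR a r) c - smulf a (tpure r c) \<in> tens_rel sR sC"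
| smulR: "tpure r (sC a c) - smulf a (tpure r c) \<in> tens_rel sR sC"

definition tmul :: "('r::ring \<times> 'c::ring \<Rightarrow> 'f::field) \<Rightarrow> ('r \<times> 'c \<Rightarrow> 'f) \<Rightarrow> ('r \<times> 'c \<Rightarrow> 'f)" where
  "tmul x y = (\<Sum>p\<in>fsupp x. \<Sum>q\<in>fsupp y. smulf (x p * y q) (tpure (fst p * fst q) (snd p * snd q)))"

text \<open>Representatives of elements of (R \<otimes> C)_{(g,h)} = R_g \<otimes> C_h.\<close>
definition tens_comp :: "('g \<Rightarrow> 'r set) \<Rightarrow> ('h \<Rightarrow> 'c set) \<Rightarrow> 'g \<times> 'h \<Rightarrow> ('r \<times> 'c \<Rightarrow> 'f::zero) set" where
  "tens_comp A B gh = {x. finite (fsupp x) \<and> fsupp x \<subseteq> A (fst gh) \<times> B (snd gh)}"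

definition TG_tensor :: "('f::field \<Rightarrow> 'r::ring \<Rightarrow> 'r) \<Rightarrow> ('g \<Rightarrow> 'r set) \<Rightarrow> ('f \<Rightarrow> 'c::ring \<Rightarrow> 'c)
    \<Rightarrow> ('h \<Rightarrow> 'c set) \<Rightarrow> ((('g \<times> 'h) \<times> nat) list \<Rightarrow> 'f) set" where
  "TG_tensor sR A sC B = {p \<in> free_alg. \<forall>s. graded_subst (tens_comp A B) s \<longrightarrow>
      geval tmul smulf s p \<in> tens_rel sR sC}"

definition perm_word :: "nat \<Rightarrow> (nat \<Rightarrow> 'k) \<Rightarrow> (nat \<Rightarrow> nat) \<Rightarrow> ('k \<times> nat) list" where
  "perm_word n g \<sigma> = map (\<lambda>j. (g (\<sigma> j), \<sigma> j)) [1..<n+1]"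

definition Pml :: "nat \<Rightarrow> (nat \<Rightarrow> 'k) \<Rightarrow> (('k \<times> nat) list \<Rightarrow> 'f::zero) set" where
  "Pml n g = {p. finite (fsupp p) \<and> fsupp p \<subseteq> {perm_word n g \<sigma> | \<sigma>. \<sigma> permutes {1..n}}}"

text \<open>For a multilinear monomial w in F<X|G\<times>H>, zeta_coef w is the scalar \<lambda> with
  x_{b_{i_1},i_1} ... x_{b_{i_k},i_k} = \<lambda> x_{b_{\<tau>(1)},\<tau>(1)} ... x_{b_{\<tau>(k)},\<tau>(k)} in the free H-graded
  beta-commutative algebra F<X|H> / beta_comm_Tideal.\<close>
definition zeta_coef :: "('h::ab_group_add \<Rightarrow> 'h \<Rightarrow> 'f::field) \<Rightarrow> ((('g \<times> 'h) \<times> nat) list) \<Rightarrow> 'f" where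
  "zeta_coef \<beta> w = (THE c.
     let wH = map (\<lambda>((a, b), i). (b, i)) w
     in monw (sort_key snd wH) - smulf c (monw wH) \<in> beta_comm_Tideal \<beta>)"

definition zeta :: "('h::ab_group_add \<Rightarrow> 'h \<Rightarrow> 'f::field) \<Rightarrow> ((('g \<times> 'h) \<times> nat) list)
    \<Rightarrow> ((('g \<times> 'h) \<times> nat) list \<Rightarrow> 'f)" where
  "zeta \<beta> w = smulf (zeta_coef \<beta> w) (monw w)"

definition lift_word :: "(nat \<Rightarrow> 'h) \<Rightarrow> ('g \<times> nat) list \<Rightarrow> (('g \<times> 'h) \<times> nat) list" where
  "lift_word h w = map (\<lambda>(a, i). ((a, h i), i)) w"

definition phi :: "('h::ab_group_add \<Rightarrow> 'h \<Rightarrow> 'f::field) \<Rightarrow> (nat \<Rightarrow> 'h) \<Rightarrow> (('g \<times> nat) list \<Rightarrow> 'f)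
    \<Rightarrow> ((('g \<times> 'h) \<times> nat) list \<Rightarrow> 'f)" where
  "phi \<beta> h p = (\<Sum>w\<in>fsupp p. smulf (p w) (zeta \<beta> (lift_word h w)))"

end

theory Submission
  imports Defs
begin

text \<open>Every monomial of f is the lift of a monomial w of P_g. By beta-commutativity, a permuted
  product c_sigma(1) ... c_sigma(n) in C is a scalar multiple of the sorted product c_1 ... c_n,
  and the sorted monomial is not a consequence of the beta-commutators (it survives in a twisted
  exterior algebra); hence the zeta coefficients are nonzero and f = phi_h(f0), where f0 divides
  each coefficient of f by its zeta coefficient. Substituting r_i \<otimes> c_i, with c chosen so that
  c_1 ... c_n \<noteq> 0, turns f into f0(r) \<otimes> c_1 ... c_n, which is zero in R \<otimes> C only if f0(r) = 0.\<close>

section \<open>Evaluation of noncommutative polynomials\<close>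

locale assoc_algebra =
  fixes m :: "'a::ab_group_add \<Rightarrow> 'a \<Rightarrow> 'a" and sc :: "'f::field \<Rightarrow> 'a \<Rightarrow> 'a"
  assumes assoc: "m (m x y) z = m x (m y z)"
    and add_left: "m (x + y) z = m x z + m y z" and add_right: "m x (y + z) = m x y + m x z"
    and scale_left: "m (sc c x) y = sc c (m x y)" and scale_right: "m x (sc c y) = sc c (m x y)"
    and scale_add_left: "sc (a + b) x = sc a x + sc b x"
    and scale_add_right: "sc a (x + y) = sc a x + sc a y"
    and scale_scale: "sc a (sc b x) = sc (a * b) x" and scale_one: "sc 1 x = x"
begin

lemma m_zero_left [simp]: "m 0 x = 0"
  using add_left[of 0 0 x] by simp

lemma m_zero_right [simp]: "m x 0 = 0"
  using add_right[of x 0 0] by simp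

lemma scale_zero_left [simp]: "sc 0 x = 0"
  using scale_add_left[of 0 0 x] by simp

lemma scale_zero_right [simp]: "sc a 0 = 0"
  using scale_add_right[of a 0 0] by simp

lemma scale_minus_one: "sc (-1) x = - x"
  using scale_add_left[of 1 "-1" x] by (simp add: scale_one eq_neg_iff_add_eq_0 add.commute)

lemma m_sum_left: "m (sum f A) y = (\<Sum>a\<in>A. m (f a) y)"
  by (induction A rule: infinite_finite_induct) (auto simp: add_left)

lemma m_sum_right: "m y (sum f A) = (\<Sum>a\<in>A. m y (f a))"
  by (induction A rule: infinite_finite_induct) (auto simp: add_right)

lemma scale_sum_right: "sc c (sum f A) = (\<Sum>a\<in>A. sc c (f a))"
  by (induction A rule: infinite_finite_induct) (auto simp: scale_add_right)

lemma scale_sum_left: "sc (sum f A) y = (\<Sum>a\<in>A. sc (f a) y)"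
  by (induction A rule: infinite_finite_induct) (auto simp: scale_add_left)

lemma gwprod_Cons: "xs \<noteq> [] \<Longrightarrow> gwprod m s (x # xs) = m (s x) (gwprod m s xs)"
  by (cases xs) auto

lemma gwprod_append:
  "u \<noteq> [] \<Longrightarrow> v \<noteq> [] \<Longrightarrow> gwprod m s (u @ v) = m (gwprod m s u) (gwprod m s v)"
  by (induction u rule: induct_list012) (auto simp: assoc gwprod_Cons)

lemma geval_superset:
  assumes "finite S" "fsupp p \<subseteq> S"
  shows "geval m sc s p = (\<Sum>w\<in>S. sc (p w) (gwprod m s w))"
  unfolding geval_def
  by (rule sum.mono_neutral_left) (use assms in \<open>auto simp: fsupp_def\<close>)

lemma geval_zero [simp]: "geval m sc s 0 = 0"
  by (simp add: geval_def fsupp_def)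

lemma geval_monw: "geval m sc s (monw w) = gwprod m s w"
  by (subst geval_superset[of "{w}"]) (auto simp: fsupp_def monw_def scale_one)

lemma geval_add:
  assumes "finite (fsupp p)" "finite (fsupp q)"
  shows "geval m sc s (p + q) = geval m sc s p + geval m sc s q"
proof -
  let ?S = "fsupp p \<union> fsupp q"
  have S: "finite ?S" "fsupp p \<subseteq> ?S" "fsupp q \<subseteq> ?S" "fsupp (p + q) \<subseteq> ?S"
    using assms by (auto simp: fsupp_def)
  show ?thesis
    by (simp only: geval_superset[OF S(1)] S(2-4)) (simp add: scale_add_left sum.distrib)
qed

lemma geval_smulf:
  assumes "finite (fsupp p)"
  shows "geval m sc s (smulf c p) = sc c (geval m sc s p)"
proof -
  have "fsupp (smulf c p) \<subseteq> fsupp p" by (auto simp: fsupp_def smulf_def)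
  then show ?thesis
    by (simp add: geval_superset[OF assms] geval_def[of _ _ _ p] scale_sum_right scale_scale smulf_def)
qed

lemma geval_diff:
  assumes "finite (fsupp p)" "finite (fsupp q)"
  shows "geval m sc s (p - q) = geval m sc s p - geval m sc s q"
proof -
  have "p - q = p + smulf (-1) q" by (auto simp: smulf_def)
  moreover have "finite (fsupp (smulf (-1) q))"
    using assms(2) by (rule finite_subset[rotated]) (auto simp: fsupp_def smulf_def)
  ultimately show ?thesis
    using assms geval_add[of p "smulf (-1) q" s] by (simp only: geval_smulf scale_minus_one) simp
qed

end

lemma fsupp_pmul_subset: "fsupp (pmul p q) \<subseteq> (\<lambda>(u, v). u @ v) ` (fsupp p \<times> fsupp q)"
proof
  fix w assume "w \<in> fsupp (pmul p q)"
  then obtain i where "p (take i w) * q (drop i w) \<noteq> 0"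
    unfolding fsupp_def pmul_def using sum.not_neutral_contains_not_neutral by fastforce
  then have "(take i w, drop i w) \<in> fsupp p \<times> fsupp q" by (auto simp: fsupp_def)
  then show "w \<in> (\<lambda>(u, v). u @ v) ` (fsupp p \<times> fsupp q)"
    by (rule rev_image_eqI) simp
qed

lemma free_algD: "p \<in> free_alg \<Longrightarrow> finite (fsupp p)"
  by (simp add: free_alg_def)

lemma pmul_in_free_alg: "p \<in> free_alg \<Longrightarrow> q \<in> free_alg \<Longrightarrow> pmul p q \<in> free_alg"
  unfolding free_alg_def using fsupp_pmul_subset[of p q] by (auto simp: pmul_def intro: finite_subset)

lemma zero_in_free_alg: "0 \<in> free_alg"
  by (auto simp: free_alg_def fsupp_def)

lemma add_in_free_alg:
  fixes p q :: "('k \<times> nat) list \<Rightarrow> 'f::comm_monoid_add"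
  assumes "p \<in> free_alg" "q \<in> free_alg"
  shows "p + q \<in> free_alg"
proof -
  have "fsupp (p + q) \<subseteq> fsupp p \<union> fsupp q" by (auto simp: fsupp_def)
  then show ?thesis using assms unfolding free_alg_def by (auto intro: finite_subset)
qed

lemma finite_fsupp_smulf:
  fixes p :: "'w \<Rightarrow> 'f::mult_zero"
  shows "finite (fsupp p) \<Longrightarrow> finite (fsupp (smulf c p))"
  by (rule finite_subset[rotated]) (auto simp: fsupp_def smulf_def)

lemma smulf_in_free_alg:
  fixes p :: "('k \<times> nat) list \<Rightarrow> 'f::mult_zero"
  shows "p \<in> free_alg \<Longrightarrow> smulf c p \<in> free_alg"
  by (auto simp: free_alg_def finite_fsupp_smulf) (simp add: smulf_def)

lemma diff_eq_add_smulf: "x - y = x + smulf (-1) (y :: 'w \<Rightarrow> 'f::ring_1)"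
  by (auto simp: smulf_def)

lemma diff_in_free_alg:
  fixes p q :: "('k \<times> nat) list \<Rightarrow> 'f::ring_1"
  shows "p \<in> free_alg \<Longrightarrow> q \<in> free_alg \<Longrightarrow> p - q \<in> free_alg"
  by (simp only: diff_eq_add_smulf add_in_free_alg smulf_in_free_alg)

lemma sum_in_free_alg: "(\<And>a. a \<in> A \<Longrightarrow> F a \<in> free_alg) \<Longrightarrow> sum F A \<in> free_alg"
  by (induction A rule: infinite_finite_induct) (auto simp: zero_in_free_alg add_in_free_alg)

lemma monw_in_free_alg: "w \<noteq> [] \<Longrightarrow> monw w \<in> free_alg"
  by (auto simp: free_alg_def fsupp_def monw_def)

lemma gwprod_pmul_in_free_alg: "(\<And>v. s v \<in> free_alg) \<Longrightarrow> gwprod pmul s w \<in> free_alg"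
  by (induction w rule: induct_list012) (auto simp: zero_in_free_alg pmul_in_free_alg)

lemma homog_subst_in_free_alg: "\<forall>k i. s (k, i) \<in> homog k \<Longrightarrow> s v \<in> free_alg"
  by (cases v) (auto simp: homog_def)

lemma Tideal_subset_free_alg:
  assumes "S \<subseteq> free_alg" "p \<in> Tideal S"
  shows "p \<in> free_alg"
  using assms(2)
proof induction
  case (endo p s)
  then show ?case unfolding geval_def
    by (intro sum_in_free_alg smulf_in_free_alg gwprod_pmul_in_free_alg homog_subst_in_free_alg)
qed (use assms(1) in \<open>blast intro: zero_in_free_alg add_in_free_alg smulf_in_free_alg pmul_in_free_alg\<close>)+

context assoc_algebra
begin

lemma geval_pmul:
  assumes p: "p \<in> free_alg" and q: "q \<in> free_alg"
  shows "geval m sc s (pmul p q) = m (geval m sc s p) (geval m sc s q)"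
proof -
  let ?P = "fsupp p" and ?Q = "fsupp q"
  have fP: "finite ?P" and fQ: "finite ?Q" using p q by (auto simp: free_alg_def)
  have nP: "u \<in> ?P \<Longrightarrow> u \<noteq> []" and nQ: "v \<in> ?Q \<Longrightarrow> v \<noteq> []" for u v
    using p q by (auto simp: free_alg_def fsupp_def)
  let ?W = "(\<lambda>(u, v). u @ v) ` (?P \<times> ?Q)"
  have fW: "finite ?W" using fP fQ by auto
  let ?H = "\<lambda>(u, v). sc (p u * q v) (gwprod m s (u @ v))"
  let ?Sg = "Sigma ?W (\<lambda>w. {..length w})"
  let ?split = "\<lambda>(w, i). (take i w, drop i w)"
  have inj: "inj_on ?split ?Sg"
    by (rule inj_onI, clarify) (metis append_take_drop_id length_take min.absorb2)
  have "geval m sc s (pmul p q) = (\<Sum>w\<in>?W. sc (pmul p q w) (gwprod m s w))"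
    by (rule geval_superset[OF fW fsupp_pmul_subset])
  also have "\<dots> = (\<Sum>(w, i)\<in>?Sg. ?H (take i w, drop i w))"
    by (simp add: pmul_def scale_sum_left sum.Sigma[OF fW])
  also have "\<dots> = (\<Sum>y\<in>?split ` ?Sg. ?H y)"
    by (subst sum.reindex[OF inj]) (simp add: split_beta)
  also have "\<dots> = (\<Sum>y\<in>?P \<times> ?Q. ?H y)"
  proof (rule sum.mono_neutral_right)
    show "?P \<times> ?Q \<subseteq> ?split ` ?Sg"
    proof clarify
      fix u v assume "u \<in> ?P" "v \<in> ?Q"
      then show "(u, v) \<in> ?split ` ?Sg"
        by (intro rev_image_eqI[of "(u @ v, length u)"]) auto
    qed
  qed (use fW in \<open>auto simp: fsupp_def\<close>)
  also have "\<dots> = (\<Sum>u\<in>?P. \<Sum>v\<in>?Q. sc (p u) (sc (q v) (m (gwprod m s u) (gwprod m s v))))"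
    unfolding sum.cartesian_product[symmetric]
    by (intro sum.cong refl) (use nP nQ in \<open>auto simp: gwprod_append scale_scale\<close>)
  also have "\<dots> = m (geval m sc s p) (geval m sc s q)"
    by (simp only: geval_def m_sum_left m_sum_right scale_left scale_right scale_sum_right)
      (subst sum.swap, simp add: scale_scale mult.commute)
  finally show ?thesis .
qed

lemma geval_sum:
  "(\<And>a. a \<in> A \<Longrightarrow> F a \<in> free_alg) \<Longrightarrow> geval m sc s (sum F A) = (\<Sum>a\<in>A. geval m sc s (F a))"
  by (induction A rule: infinite_finite_induct)
    (auto simp: geval_add free_algD sum_in_free_alg)

lemma geval_gwprod_pmul:
  "(\<And>v. s v \<in> free_alg) \<Longrightarrow> geval m sc t (gwprod pmul s w) = gwprod m (\<lambda>v. geval m sc t (s v)) w"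
  by (induction w rule: induct_list012) (auto simp: geval_pmul gwprod_pmul_in_free_alg)

lemma geval_geval:
  assumes "\<And>v. s v \<in> free_alg" and "finite (fsupp p)"
  shows "geval m sc t (geval pmul smulf s p) = geval m sc (\<lambda>v. geval m sc t (s v)) p"
  unfolding geval_def[of pmul smulf s p]
  by (subst geval_sum)
    (auto simp: assms geval_smulf free_algD gwprod_pmul_in_free_alg geval_gwprod_pmul
      smulf_in_free_alg geval_def[of m sc _ p])

lemma Tideal_vanishes:
  assumes S: "S \<subseteq> free_alg"
    and gen: "\<And>p t. p \<in> S \<Longrightarrow> t \<in> \<Sigma> \<Longrightarrow> geval m sc t p = 0"
    and endo: "\<And>s t. \<forall>k i. s (k, i) \<in> homog k \<Longrightarrow> t \<in> \<Sigma> \<Longrightarrow> (\<lambda>v. geval m sc t (s v)) \<in> \<Sigma>"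
    and p: "p \<in> Tideal S" and t: "t \<in> \<Sigma>"
  shows "geval m sc t p = 0"
  using p t
proof (induction arbitrary: t)
  case (add p q)
  then show ?case
    by (simp only: geval_add free_algD Tideal_subset_free_alg[OF S]) simp
next
  case (smul p c)
  then show ?case
    by (simp add: geval_smulf free_algD Tideal_subset_free_alg[OF S])
next
  case (mult_left p q)
  then show ?case
    by (simp add: geval_pmul Tideal_subset_free_alg[OF S])
next
  case (mult_right p q)
  then show ?case
    by (simp add: geval_pmul Tideal_subset_free_alg[OF S])
next
  case (endo p s)
  have "geval m sc (\<lambda>v. geval m sc t (s v)) p = 0"
    using endo by (blast intro: assms(3))
  then show ?case
    using endo by (simp add: geval_geval homog_subst_in_free_alg free_algD Tideal_subset_free_alg[OF S])
qed (simp_all add: gen)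

end

section \<open>A twisted exterior algebra\<close>

lemma bicharacter_mult_swap: "bicharacter \<beta> \<Longrightarrow> \<beta> a b * \<beta> b a = 1"
  unfolding bicharacter_def by (metis inverse_inverse_eq right_inverse)

lemma bicharacter_add_left: "bicharacter \<beta> \<Longrightarrow> \<beta> (a + b) c = \<beta> a c * \<beta> b c"
  unfolding bicharacter_def by blast

lemma bicharacter_add_right: "bicharacter \<beta> \<Longrightarrow> \<beta> c (a + b) = \<beta> c a * \<beta> c b"
  unfolding bicharacter_def by blast

lemma bicharacter_nonzero: "bicharacter \<beta> \<Longrightarrow> \<beta> a b \<noteq> 0"
  unfolding bicharacter_def by blast

text \<open>A test algebra for the beta-commutator identities: matrices with rows and columns indexed
  by the subsets of {1..N}, i.e. operators on the beta-twisted exterior algebra on e_1, ..., e_N.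
  The creation operator of i, of degree d i, sends e_T to the twisted e_(insert i T); creation
  operators beta-commute, while their product in increasing order is nonzero.\<close>

definition smat_mult :: "nat \<Rightarrow> (nat set \<Rightarrow> nat set \<Rightarrow> 'f::field) \<Rightarrow> (nat set \<Rightarrow> nat set \<Rightarrow> 'f)
    \<Rightarrow> (nat set \<Rightarrow> nat set \<Rightarrow> 'f)" where
  "smat_mult N A B = (\<lambda>S T. \<Sum>X\<in>Pow {1..N}. A S X * B X T)"

definition smat_scale :: "'f::field \<Rightarrow> (nat set \<Rightarrow> nat set \<Rightarrow> 'f) \<Rightarrow> (nat set \<Rightarrow> nat set \<Rightarrow> 'f)" where
  "smat_scale c A = (\<lambda>S T. c * A S T)"

lemma smat_mult_apply: "smat_mult N A B S T = (\<Sum>X\<in>Pow {1..N}. A S X * B X T)"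
  by (simp add: smat_mult_def)

interpretation smat: assoc_algebra "smat_mult N" smat_scale
proof
  fix x y z :: "nat set \<Rightarrow> nat set \<Rightarrow> 'f::field" and c a b :: 'f
  show "smat_mult N (smat_mult N x y) z = smat_mult N x (smat_mult N y z)"
    unfolding smat_mult_def
    by (intro ext) (simp add: sum_distrib_left sum_distrib_right mult.assoc, rule sum.swap)
qed (auto simp: smat_mult_def smat_scale_def fun_eq_iff sum.distrib sum_distrib_left algebra_simps)

definition twist :: "('h \<Rightarrow> 'h \<Rightarrow> 'f::field) \<Rightarrow> (nat \<Rightarrow> 'h) \<Rightarrow> nat \<Rightarrow> nat set \<Rightarrow> 'f" where
  "twist \<beta> d i T = (\<Prod>b\<in>{b\<in>T. b < i}. \<beta> (d i) (d b))"

definition creation :: "('h \<Rightarrow> 'h \<Rightarrow> 'f::field) \<Rightarrow> (nat \<Rightarrow> 'h) \<Rightarrow> nat \<Rightarrow> (nat set \<Rightarrow> nat set \<Rightarrow> 'f)" where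
  "creation \<beta> d i = (\<lambda>S T. if i \<notin> T \<and> S = insert i T then twist \<beta> d i T else 0)"

lemma smat_mult_creation:
  assumes "j \<in> {1..N}"
  shows "smat_mult N A (creation \<beta> d j) S T
    = (if T \<subseteq> {1..N} \<and> j \<notin> T then A S (insert j T) * twist \<beta> d j T else 0)"
proof -
  have "smat_mult N A (creation \<beta> d j) S T
      = (\<Sum>X\<in>Pow {1..N}. if X = insert j T then A S X * (if j \<notin> T then twist \<beta> d j T else 0) else 0)"
    unfolding smat_mult_def creation_def by (rule sum.cong) auto
  then show ?thesis using assms by (simp add: sum.delta)
qed

lemma twist_insert:
  assumes "finite T" "j \<notin> T"
  shows "twist \<beta> d i (insert j T) = twist \<beta> d i T * (if j < i then \<beta> (d i) (d j) else 1)"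
proof (cases "j < i")
  case True
  then have "{b \<in> insert j T. b < i} = insert j {b \<in> T. b < i}" by auto
  then show ?thesis using assms True by (simp add: twist_def mult.commute)
next
  case False
  then have "{b \<in> insert j T. b < i} = {b \<in> T. b < i}" by auto
  then show ?thesis using False by (simp add: twist_def)
qed

lemma creation_commute:
  assumes B: "bicharacter \<beta>" and i: "i \<in> {1..N}" and j: "j \<in> {1..N}"
  shows "smat_mult N (creation \<beta> d i) (creation \<beta> d j)
    = smat_scale (\<beta> (d i) (d j)) (smat_mult N (creation \<beta> d j) (creation \<beta> d i))"
proof (intro ext)
  fix S T
  show "smat_mult N (creation \<beta> d i) (creation \<beta> d j) S T
    = smat_scale (\<beta> (d i) (d j)) (smat_mult N (creation \<beta> d j) (creation \<beta> d i)) S T"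
  proof (cases "T \<subseteq> {1..N} \<and> i \<noteq> j \<and> i \<notin> T \<and> j \<notin> T \<and> S = insert i (insert j T)")
    case True
    then have fT: "finite T" by (meson finite_atLeastAtMost finite_subset)
    have S: "S = insert j (insert i T)" using True by auto
    have "twist \<beta> d i (insert j T) = twist \<beta> d i T * (if j < i then \<beta> (d i) (d j) else 1)"
      "twist \<beta> d j (insert i T) = twist \<beta> d j T * (if i < j then \<beta> (d j) (d i) else 1)"
      using twist_insert[OF fT] True by blast+
    then show ?thesis
      using True i j bicharacter_mult_swap[OF B, of "d i" "d j"]
      by (simp add: smat_mult_creation smat_scale_def) (simp add: creation_def S)
  next
    case False
    then show ?thesis
      using i j by (simp add: smat_mult_creation smat_scale_def) (auto simp: creation_def insert_commute)
  qed
qed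

inductive creation_alg :: "nat \<Rightarrow> ('h \<Rightarrow> 'h \<Rightarrow> 'f::field) \<Rightarrow> (nat \<Rightarrow> 'h) \<Rightarrow> 'h::ab_group_add
    \<Rightarrow> (nat set \<Rightarrow> nat set \<Rightarrow> 'f) \<Rightarrow> bool"
  for N \<beta> d where
  zero: "creation_alg N \<beta> d k 0"
| gen: "i \<in> {1..N} \<Longrightarrow> d i = k \<Longrightarrow> creation_alg N \<beta> d k (creation \<beta> d i)"
| add: "creation_alg N \<beta> d k A \<Longrightarrow> creation_alg N \<beta> d k B \<Longrightarrow> creation_alg N \<beta> d k (A + B)"
| scale: "creation_alg N \<beta> d k A \<Longrightarrow> creation_alg N \<beta> d k (smat_scale c A)"
| mult: "creation_alg N \<beta> d k A \<Longrightarrow> creation_alg N \<beta> d l B \<Longrightarrow> creation_alg N \<beta> d (k + l) (smat_mult N A B)"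

lemma creation_commute_creation_alg:
  assumes B: "bicharacter \<beta>" and Y: "creation_alg N \<beta> d l Y" and i: "i \<in> {1..N}"
  shows "smat_mult N (creation \<beta> d i) Y = smat_scale (\<beta> (d i) l) (smat_mult N Y (creation \<beta> d i))"
  using Y
proof induction
  case (gen j k)
  then show ?case using creation_commute[OF B i] by auto
next
  case (add k A B')
  then show ?case by (simp only: smat.add_right smat.add_left smat.scale_add_right)
next
  case (scale k A c)
  then show ?case by (simp add: smat.scale_right smat.scale_left smat.scale_scale mult.commute)
next
  case (mult k A l B')
  have "smat_mult N (creation \<beta> d i) (smat_mult N A B')
      = smat_mult N (smat_mult N (creation \<beta> d i) A) B'"
    by (simp add: smat.assoc)
  also have "\<dots> = smat_scale (\<beta> (d i) k) (smat_mult N A (smat_mult N (creation \<beta> d i) B'))"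
    using mult by (simp add: smat.scale_left smat.assoc)
  also have "\<dots> = smat_scale (\<beta> (d i) k * \<beta> (d i) l) (smat_mult N (smat_mult N A B') (creation \<beta> d i))"
    using mult by (simp add: smat.scale_right smat.scale_scale smat.assoc)
  finally show ?case by (simp add: bicharacter_add_right[OF B])
qed (simp only: smat.m_zero_left smat.m_zero_right smat.scale_zero_right)

lemma creation_alg_commute:
  assumes B: "bicharacter \<beta>" and X: "creation_alg N \<beta> d k X" and Y: "creation_alg N \<beta> d l Y"
  shows "smat_mult N X Y = smat_scale (\<beta> k l) (smat_mult N Y X)"
  using X Y
proof (induction arbitrary: l Y)
  case (gen i k)
  then show ?case using creation_commute_creation_alg[OF B] by blast
next
  case (add k A B')
  then show ?case by (simp only: smat.add_right smat.add_left smat.scale_add_right)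
next
  case (scale k A c)
  then show ?case by (simp add: smat.scale_right smat.scale_left smat.scale_scale mult.commute)
next
  case (mult k A k' B')
  have "smat_mult N (smat_mult N A B') Y = smat_scale (\<beta> k' l) (smat_mult N (smat_mult N A Y) B')"
    by (simp only: smat.assoc mult.IH(2)[OF mult.prems] smat.scale_right)
  also have "\<dots> = smat_scale (\<beta> k' l * \<beta> k l) (smat_mult N Y (smat_mult N A B'))"
    by (simp only: mult.IH(1)[OF mult.prems] smat.scale_left smat.scale_scale smat.assoc)
  finally show ?case by (simp add: bicharacter_add_left[OF B] mult.commute)
qed (simp only: smat.m_zero_left smat.m_zero_right smat.scale_zero_right)

lemma creation_alg_sum:
  "(\<And>a. a \<in> A \<Longrightarrow> creation_alg N \<beta> d k (f a)) \<Longrightarrow> creation_alg N \<beta> d k (sum f A)"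
  by (induction A rule: infinite_finite_induct) (auto intro: creation_alg.intros)

lemma creation_alg_gwprod:
  assumes "\<And>k i. creation_alg N \<beta> d k (t (k, i))"
  shows "creation_alg N \<beta> d (word_deg w) (gwprod (smat_mult N) t w)"
proof (induction w rule: induct_list012)
  case (2 x)
  then show ?case using assms by (cases x) (simp add: word_deg_def)
next
  case (3 x y zs)
  have "word_deg (x # y # zs) = fst x + word_deg (y # zs)" by (simp add: word_deg_def)
  then show ?case using 3 assms by (cases x) (auto intro: creation_alg.mult)
qed (simp only: gwprod.simps creation_alg.zero)

lemma creation_alg_geval_homog:
  assumes "\<And>k i. creation_alg N \<beta> d k (t (k, i))" and "q \<in> homog k"
  shows "creation_alg N \<beta> d k (geval (smat_mult N) smat_scale t q)"
  unfolding geval_def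
  using assms creation_alg_gwprod[OF assms(1)]
  by (auto intro!: creation_alg_sum creation_alg.scale simp: homog_def)

lemma beta_comm_in_free_alg: "beta_comm \<beta> h k \<in> free_alg"
  unfolding beta_comm_def by (intro diff_in_free_alg smulf_in_free_alg monw_in_free_alg) auto

lemma beta_comm_Tideal_vanishes_creation_alg:
  fixes \<beta> :: "'h::ab_group_add \<Rightarrow> 'h \<Rightarrow> 'f::field"
  assumes B: "bicharacter \<beta>" and p: "p \<in> beta_comm_Tideal \<beta>"
    and t: "\<And>k i. creation_alg N \<beta> d k (t (k, i))"
  shows "geval (smat_mult N) smat_scale t p = 0"
proof (rule smat.Tideal_vanishes[where \<Sigma> = "{t. \<forall>k i. creation_alg N \<beta> d k (t (k, i))}"])
  show "{beta_comm \<beta> h k |h k. True} \<subseteq> free_alg" by (auto intro: beta_comm_in_free_alg)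
  show "p \<in> Tideal {beta_comm \<beta> h k |h k. True}" using p by (simp add: beta_comm_Tideal_def)
next
  fix q and t' :: "'h \<times> nat \<Rightarrow> nat set \<Rightarrow> nat set \<Rightarrow> 'f"
  assume "q \<in> {beta_comm \<beta> h k |h k. True}" and t': "t' \<in> {t. \<forall>k i. creation_alg N \<beta> d k (t (k, i))}"
  then obtain h k where q: "q = beta_comm \<beta> h k" by blast
  have "finite (fsupp (monw [(h, 1::nat), (k, 2)] :: _ \<Rightarrow> 'f))"
    "finite (fsupp (monw [(k, 2::nat), (h, 1)] :: _ \<Rightarrow> 'f))"
    "finite (fsupp (smulf (\<beta> h k) (monw [(k, 2::nat), (h, 1)])))"
    by (simp_all add: free_algD monw_in_free_alg smulf_in_free_alg)
  then have "geval (smat_mult N) smat_scale t' q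
      = smat_mult N (t' (h, 1)) (t' (k, 2)) - smat_scale (\<beta> h k) (smat_mult N (t' (k, 2)) (t' (h, 1)))"
    unfolding q beta_comm_def by (simp only: smat.geval_diff smat.geval_smulf smat.geval_monw gwprod.simps)
  then show "geval (smat_mult N) smat_scale t' q = 0"
    using creation_alg_commute[OF B, of N d h "t' (h, 1)" k "t' (k, 2)"] t' by simp
qed (use t in \<open>auto intro!: creation_alg_geval_homog\<close>)

definition creation_subst :: "nat \<Rightarrow> ('h \<Rightarrow> 'h \<Rightarrow> 'f::field) \<Rightarrow> (nat \<Rightarrow> 'h) \<Rightarrow> 'h \<times> nat
    \<Rightarrow> (nat set \<Rightarrow> nat set \<Rightarrow> 'f)" where
  "creation_subst N \<beta> h = (\<lambda>(k, i). if i \<in> {1..N} \<and> k = h i then creation \<beta> h i else 0)"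

lemma creation_alg_creation_subst: "creation_alg N \<beta> h k (creation_subst N \<beta> h (k, i))"
  unfolding creation_subst_def by (auto intro: creation_alg.intros)

lemma gwprod_creation_subst_entry:
  assumes "1 \<le> a" "a \<le> N"
  shows "gwprod (smat_mult N) (creation_subst N \<beta> h) (map (\<lambda>j. (h j, j)) [a..<N+1]) {a..N} {} = 1"
  using assms(2,1)
proof (induction a rule: inc_induct)
  case base
  then show ?case by (simp add: creation_subst_def creation_def twist_def)
next
  case (step a)
  let ?G = "gwprod (smat_mult N) (creation_subst N \<beta> h) (map (\<lambda>j. (h j, j)) [Suc a..<N+1])"
  have "[a..<N+1] = a # [Suc a..<N+1]" using step by (simp add: upt_conv_Cons)
  then have "gwprod (smat_mult N) (creation_subst N \<beta> h) (map (\<lambda>j. (h j, j)) [a..<N+1])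
      = smat_mult N (creation \<beta> h a) ?G"
    using step by (simp add: smat.gwprod_Cons creation_subst_def)
  moreover have "smat_mult N (creation \<beta> h a) ?G {a..N} {} = ?G {Suc a..N} {}"
  proof -
    have "creation \<beta> h a {a..N} X = (if X = {Suc a..N} then 1 else 0)" for X
    proof -
      have "a \<notin> X \<and> {a..N} = insert a X \<longleftrightarrow> X = {Suc a..N}"
      proof
        assume "a \<notin> X \<and> {a..N} = insert a X"
        then have "X = {a..N} - {a}" by blast
        then show "X = {Suc a..N}" by auto
      qed (use step in auto)
      moreover have "twist \<beta> h a {Suc a..N} = 1"
      proof -
        have "{b \<in> {Suc a..N}. b < a} = {}" by auto
        then show ?thesis unfolding twist_def by (simp only: prod.empty)
      qed
      ultimately show ?thesis by (auto simp: creation_def)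
    qed
    then have "smat_mult N (creation \<beta> h a) ?G {a..N} {}
        = (\<Sum>X\<in>Pow {1..N}. if X = {Suc a..N} then ?G X {} else 0)"
      by (subst smat_mult_apply) (rule sum.cong, auto)
    also have "\<dots> = ?G {Suc a..N} {}"
      using step by (subst sum.delta) auto
    finally show ?thesis .
  qed
  ultimately show ?case using step by simp
qed

lemma sorted_monomial_notin_beta_comm_Tideal:
  fixes \<beta> :: "'h::ab_group_add \<Rightarrow> 'h \<Rightarrow> 'f::field"
  assumes B: "bicharacter \<beta>" and N: "1 \<le> N"
  shows "(monw (perm_word N h id) :: ('h \<times> nat) list \<Rightarrow> 'f) \<notin> beta_comm_Tideal \<beta>"
proof
  assume "(monw (perm_word N h id) :: ('h \<times> nat) list \<Rightarrow> 'f) \<in> beta_comm_Tideal \<beta>"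
  from beta_comm_Tideal_vanishes_creation_alg[OF B this creation_alg_creation_subst]
  have "gwprod (smat_mult N) (creation_subst N \<beta> h) (map (\<lambda>j. (h j, j)) [1..<N+1]) = 0"
    by (simp add: smat.geval_monw perm_word_def)
  with gwprod_creation_subst_entry[OF order_refl N, of \<beta> h] show False by simp
qed

section \<open>Reordering products in beta-commutative algebras\<close>

lemma graded_algebra_assoc_algebra:
  fixes sc :: "'f::field \<Rightarrow> 'a::ring \<Rightarrow> 'a"
  assumes "graded_algebra sc A"
  shows "assoc_algebra (*) sc"
proof -
  interpret V: vector_space sc using assms unfolding graded_algebra_def by blast
  have S: "\<forall>c x y. sc c (x * y) = sc c x * y \<and> sc c (x * y) = x * sc c y"
    using assms unfolding graded_algebra_def by blast
  show ?thesis
  proof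
    fix x y :: 'a and c :: 'f
    show "sc c x * y = sc c (x * y)" "x * sc c y = sc c (x * y)" using S by metis+
  qed (simp_all add: mult.assoc algebra_simps V.scale_left_distrib V.scale_right_distrib)
qed

lemma beta_commutativeD:
  "beta_commutative \<beta> sc A \<Longrightarrow> a \<in> A h \<Longrightarrow> b \<in> A k \<Longrightarrow> a * b = sc (\<beta> h k) (b * a)"
  unfolding beta_commutative_def by (metis eq_iff_diff_eq_0)

lemma graded_substD: "graded_subst A s \<Longrightarrow> s x \<in> A (fst x)"
  unfolding graded_subst_def by (cases x) auto

text \<open>The reordering scalar depends only on the degrees, so it is chosen before the substitution.\<close>

lemma gwprod_insort_key:
  fixes sc :: "'f::field \<Rightarrow> 'a::ring \<Rightarrow> 'a" and \<beta> :: "'h::ab_group_add \<Rightarrow> 'h \<Rightarrow> 'f"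
  assumes GA: "graded_algebra sc A" and BC: "beta_commutative \<beta> sc A" and B: "bicharacter \<beta>"
    and "v \<noteq> []"
  shows "\<exists>\<nu>. \<nu> \<noteq> 0 \<and> (\<forall>s. graded_subst A s \<longrightarrow>
      s x * gwprod (*) s v = sc \<nu> (gwprod (*) s (insort_key snd x v)))"
  using \<open>v \<noteq> []\<close>
proof (induction v)
  case (Cons y v)
  interpret assoc_algebra "(*)" sc by (rule graded_algebra_assoc_algebra[OF GA])
  have swap: "s x * s y = sc (\<beta> (fst x) (fst y)) (s y * s x)" if "graded_subst A s" for s
    using that by (intro beta_commutativeD[OF BC] graded_substD)
  consider "snd x \<le> snd y" | "\<not> snd x \<le> snd y" "v = []" | "\<not> snd x \<le> snd y" "v \<noteq> []"
    by blast
  then show ?case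
  proof cases
    case 1
    then show ?thesis by (intro exI[of _ 1]) (simp add: scale_one gwprod_Cons)
  next
    case 2
    then show ?thesis
      using bicharacter_nonzero[OF B] swap by (intro exI[of _ "\<beta> (fst x) (fst y)"]) simp
  next
    case 3
    obtain \<nu> where \<nu>: "\<nu> \<noteq> 0" "\<And>s. graded_subst A s \<Longrightarrow>
        s x * gwprod (*) s v = sc \<nu> (gwprod (*) s (insort_key snd x v))"
      using Cons.IH 3 by blast
    have ins: "insort_key snd x v \<noteq> []" by (cases v) auto
    show ?thesis
    proof (intro exI[of _ "\<beta> (fst x) (fst y) * \<nu>"] conjI allI impI)
      show "\<beta> (fst x) (fst y) * \<nu> \<noteq> 0" using \<nu> bicharacter_nonzero[OF B] by simp
      fix s assume s: "graded_subst A s"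
      have "s x * gwprod (*) s (y # v) = (s x * s y) * gwprod (*) s v"
        using 3 by (simp add: gwprod_Cons mult.assoc)
      also have "\<dots> = sc (\<beta> (fst x) (fst y) * \<nu>) (s y * gwprod (*) s (insort_key snd x v))"
        by (simp add: swap[OF s] \<nu>(2)[OF s] scale_left scale_right scale_scale mult.assoc)
      also have "\<dots> = sc (\<beta> (fst x) (fst y) * \<nu>) (gwprod (*) s (insort_key snd x (y # v)))"
        using 3 ins by (simp add: gwprod_Cons)
      finally show "s x * gwprod (*) s (y # v)
          = sc (\<beta> (fst x) (fst y) * \<nu>) (gwprod (*) s (insort_key snd x (y # v)))" .
    qed
  qed
qed simp

lemma gwprod_sort_key:
  fixes sc :: "'f::field \<Rightarrow> 'a::ring \<Rightarrow> 'a" and \<beta> :: "'h::ab_group_add \<Rightarrow> 'h \<Rightarrow> 'f"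
  assumes GA: "graded_algebra sc A" and BC: "beta_commutative \<beta> sc A" and B: "bicharacter \<beta>"
    and "u \<noteq> []"
  shows "\<exists>\<mu>. \<mu> \<noteq> 0 \<and> (\<forall>s. graded_subst A s \<longrightarrow>
      gwprod (*) s u = sc \<mu> (gwprod (*) s (sort_key snd u)))"
  using \<open>u \<noteq> []\<close>
proof (induction u)
  case (Cons x xs)
  interpret assoc_algebra "(*)" sc by (rule graded_algebra_assoc_algebra[OF GA])
  show ?case
  proof (cases "xs = []")
    case True
    then show ?thesis by (intro exI[of _ 1]) (simp add: scale_one)
  next
    case False
    obtain \<mu> where \<mu>: "\<mu> \<noteq> 0" "\<And>s. graded_subst A s \<Longrightarrow>
        gwprod (*) s xs = sc \<mu> (gwprod (*) s (sort_key snd xs))"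
      using Cons.IH False by blast
    have "sort_key snd xs \<noteq> []" using False by (cases xs) auto
    then obtain \<nu> where \<nu>: "\<nu> \<noteq> 0" "\<And>s. graded_subst A s \<Longrightarrow>
        s x * gwprod (*) s (sort_key snd xs) = sc \<nu> (gwprod (*) s (insort_key snd x (sort_key snd xs)))"
      using gwprod_insort_key[OF GA BC B] by blast
    show ?thesis
      using False \<mu> \<nu> by (intro exI[of _ "\<mu> * \<nu>"]) (simp add: gwprod_Cons scale_right scale_scale)
  qed
qed simp

lemma set_perm_word:
  assumes "\<sigma> permutes {1..n}"
  shows "set (perm_word n h \<sigma>) = (\<lambda>j. (h j, j)) ` {1..n}"
proof -
  have "set (perm_word n h \<sigma>) = (\<lambda>j. (h j, j)) ` (\<sigma> ` {1..n})"
    unfolding perm_word_def by (auto simp: image_image)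
  also have "\<sigma> ` {1..n} = {1..n}" by (rule permutes_image[OF assms])
  finally show ?thesis .
qed

lemma sort_key_perm_word:
  assumes \<sigma>: "\<sigma> permutes {1..n}"
  shows "sort_key snd (perm_word n h \<sigma>) = perm_word n h id"
proof (rule map_sorted_distinct_set_unique[where f = snd])
  have S: "set (sort_key snd (perm_word n h \<sigma>)) = (\<lambda>j. (h j, j)) ` {1..n}"
    "set (perm_word n h id) = (\<lambda>j. (h j, j)) ` {1..n}"
    using set_perm_word[OF \<sigma>] set_perm_word[OF permutes_id] by simp_all
  then show "inj_on snd (set (sort_key snd (perm_word n h \<sigma>)) \<union> set (perm_word n h id))"
    "set (sort_key snd (perm_word n h \<sigma>)) = set (perm_word n h id)"
    by (auto simp: inj_on_def)
  have "map snd (perm_word n h \<sigma>) = map \<sigma> [1..<n+1]" by (simp add: perm_word_def)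
  moreover have "distinct (map \<sigma> [1..<n+1])"
    using permutes_inj[OF \<sigma>] by (auto simp: distinct_map intro: inj_on_subset)
  ultimately have "distinct (map snd (perm_word n h \<sigma>))" by simp
  then show "distinct (map snd (sort_key snd (perm_word n h \<sigma>)))"
    by (metis distinct_map distinct_sort set_sort)
  have ms: "map snd (perm_word n h id) = [1..<n+1]"
    unfolding perm_word_def by (simp add: o_def del: upt_Suc)
  show "sorted (map snd (sort_key snd (perm_word n h \<sigma>)))" by (rule sorted_sort_key)
  show "sorted (map snd (perm_word n h id))" "distinct (map snd (perm_word n h id))"
    unfolding ms by (simp_all del: upt_Suc)
qed

lemma perm_word_ne_Nil: "1 \<le> n \<Longrightarrow> perm_word n h \<sigma> \<noteq> []"
  by (simp add: perm_word_def)

section \<open>The zeta coefficients\<close>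

lemma monw_perm_word_relation:
  fixes sC :: "'f::field \<Rightarrow> 'c::ring \<Rightarrow> 'c" and \<beta> :: "'h::ab_group_add \<Rightarrow> 'h \<Rightarrow> 'f"
  assumes GA: "graded_algebra sC Cg" and BC: "beta_commutative \<beta> sC Cg" and B: "bicharacter \<beta>"
    and GEN: "generates_beta_variety \<beta> sC Cg"
    and n: "1 \<le> n" and \<sigma>: "\<sigma> permutes {1..n}"
  shows "\<exists>c. monw (perm_word n h id) - smulf c (monw (perm_word n h \<sigma>)) \<in> beta_comm_Tideal \<beta>"
proof -
  interpret assoc_algebra "(*)" sC by (rule graded_algebra_assoc_algebra[OF GA])
  let ?A = "perm_word n h id" and ?S = "perm_word n h \<sigma>"
  obtain \<mu> where \<mu>: "\<mu> \<noteq> 0" "\<And>s. graded_subst Cg s \<Longrightarrow> gwprod (*) s ?S = sC \<mu> (gwprod (*) s ?A)"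
    using gwprod_sort_key[OF GA BC B perm_word_ne_Nil[OF n]] sort_key_perm_word[OF \<sigma>] by metis
  have free: "monw ?A \<in> free_alg" "monw ?S \<in> free_alg" "smulf (inverse \<mu>) (monw ?S) \<in> free_alg"
    by (simp_all add: monw_in_free_alg smulf_in_free_alg perm_word_ne_Nil[OF n])
  have "monw ?A - smulf (inverse \<mu>) (monw ?S) \<in> TG sC Cg"
    unfolding TG_def
  proof (intro CollectI conjI allI impI)
    show "monw ?A - smulf (inverse \<mu>) (monw ?S) \<in> free_alg"
      by (rule diff_in_free_alg[OF free(1,3)])
    fix s assume s: "graded_subst Cg s"
    show "geval (*) sC s (monw ?A - smulf (inverse \<mu>) (monw ?S)) = 0"
      using \<mu>(1)
      by (simp only: geval_diff[OF free(1,3)[THEN free_algD]] geval_smulf[OF free(2)[THEN free_algD]]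
          geval_monw \<mu>(2)[OF s] scale_scale) (simp add: scale_one)
  qed
  then show ?thesis using GEN unfolding generates_beta_variety_def by blast
qed

lemma beta_comm_Tideal_coeff_unique:
  assumes "a - smulf c b \<in> beta_comm_Tideal \<beta>" "a - smulf c' b \<in> beta_comm_Tideal \<beta>"
    and "b \<notin> beta_comm_Tideal \<beta>"
  shows "c = c'"
proof (rule ccontr)
  assume "c \<noteq> c'"
  have "smulf (inverse (c' - c)) ((a - smulf c b) + smulf (-1) (a - smulf c' b)) = b"
    using \<open>c \<noteq> c'\<close> by (auto simp: fun_eq_iff smulf_def field_simps)
  moreover have "smulf (inverse (c' - c)) ((a - smulf c b) + smulf (-1) (a - smulf c' b))
      \<in> beta_comm_Tideal \<beta>"
    using assms(1,2) unfolding beta_comm_Tideal_def by (intro Tideal.smul Tideal.add)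
  ultimately show False using assms(3) by simp
qed

lemma proj_lift_perm_word: "map (\<lambda>((a, b), i). (b, i)) (lift_word h (perm_word n g \<sigma>)) = perm_word n h \<sigma>"
  by (simp add: lift_word_def perm_word_def)

lemma zeta_coef_perm_word:
  fixes sC :: "'f::field \<Rightarrow> 'c::ring \<Rightarrow> 'c" and \<beta> :: "'h::ab_group_add \<Rightarrow> 'h \<Rightarrow> 'f"
    and g :: "nat \<Rightarrow> 'g" and h :: "nat \<Rightarrow> 'h"
  assumes GA: "graded_algebra sC Cg" and BC: "beta_commutative \<beta> sC Cg" and B: "bicharacter \<beta>"
    and GEN: "generates_beta_variety \<beta> sC Cg"
    and n: "1 \<le> n" and \<sigma>: "\<sigma> permutes {1..n}"
  defines "z \<equiv> zeta_coef \<beta> (lift_word h (perm_word n g \<sigma>))"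
  shows "z \<noteq> 0" and "monw (perm_word n h id) - smulf z (monw (perm_word n h \<sigma>)) \<in> beta_comm_Tideal \<beta>"
proof -
  let ?A = "perm_word n h id" and ?S = "perm_word n h \<sigma>"
  let ?P = "\<lambda>c. (monw ?A - smulf c (monw ?S) :: ('h \<times> nat) list \<Rightarrow> 'f) \<in> beta_comm_Tideal \<beta>"
  have z: "z = (THE c. ?P c)"
    unfolding z_def zeta_coef_def Let_def proj_lift_perm_word sort_key_perm_word[OF \<sigma>] ..
  obtain c where c: "?P c" using monw_perm_word_relation[OF GA BC B GEN n \<sigma>] by blast
  have notA: "(monw ?A :: ('h \<times> nat) list \<Rightarrow> 'f) \<notin> beta_comm_Tideal \<beta>"
    by (rule sorted_monomial_notin_beta_comm_Tideal[OF B n])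
  have notS: "(monw ?S :: ('h \<times> nat) list \<Rightarrow> 'f) \<notin> beta_comm_Tideal \<beta>"
  proof
    assume "monw ?S \<in> beta_comm_Tideal \<beta>"
    then have "(monw ?A - smulf c (monw ?S)) + smulf c (monw ?S) \<in> beta_comm_Tideal \<beta>"
      using c unfolding beta_comm_Tideal_def by (intro Tideal.add Tideal.smul)
    then show False using notA by simp
  qed
  have "\<exists>!c. ?P c"
    using c beta_comm_Tideal_coeff_unique[OF _ _ notS] by blast
  then have "?P z" unfolding z by (rule theI')
  then show "monw ?A - smulf z (monw ?S) \<in> beta_comm_Tideal \<beta>" .
  show "z \<noteq> 0"
  proof
    assume "z = 0"
    with \<open>?P z\<close> have "monw ?A - smulf 0 (monw ?S) \<in> beta_comm_Tideal \<beta>" by simp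
    moreover have "monw ?A - smulf 0 (monw ?S) = (monw ?A :: ('h \<times> nat) list \<Rightarrow> 'f)"
      by (simp add: fun_eq_iff smulf_def)
    ultimately show False using notA by simp
  qed
qed

section \<open>Elementary tensors\<close>

lemma exists_linear_functional_eq_one:
  fixes sc :: "'f::field \<Rightarrow> 'a::ab_group_add \<Rightarrow> 'a"
  assumes VS: "vector_space sc" and x: "x \<noteq> 0"
  shows "\<exists>\<phi>. (\<forall>a b. \<phi> (a + b) = \<phi> a + \<phi> b) \<and> (\<forall>c a. \<phi> (sc c a) = c * \<phi> a) \<and> \<phi> x = 1"
proof -
  have VF: "vector_space ((*) :: 'f \<Rightarrow> 'f \<Rightarrow> 'f)"
    by unfold_locales (auto simp: algebra_simps)
  interpret VP: vector_space_pair sc "(*) :: 'f \<Rightarrow> 'f \<Rightarrow> 'f"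
    by (intro vector_space_pair.intro VS VF)
  have ind: "VP.vs1.independent {x}"
    using x by (intro VP.vs1.independent_insertI) (auto simp: VP.vs1.independent_empty)
  note lin = VP.linear_construct[OF ind, of "\<lambda>_. 1"]
  show ?thesis
    by (intro exI[of _ "VP.construct {x} (\<lambda>_. 1)"] conjI allI)
      (auto simp: VP.linear_add[OF lin] VP.linear_scale[OF lin] VP.construct_basis[OF ind])
qed

definition pairing :: "('p \<Rightarrow> 'f::field) \<Rightarrow> ('p \<Rightarrow> 'f) \<Rightarrow> 'f" where
  "pairing w z = (\<Sum>p\<in>fsupp z. z p * w p)"

lemma pairing_superset: "finite S \<Longrightarrow> fsupp z \<subseteq> S \<Longrightarrow> pairing w z = (\<Sum>p\<in>S. z p * w p)"
  unfolding pairing_def by (rule sum.mono_neutral_left) (auto simp: fsupp_def)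

lemma pairing_add:
  assumes "finite (fsupp x)" "finite (fsupp y)"
  shows "pairing w (x + y) = pairing w x + pairing w y"
proof -
  let ?S = "fsupp x \<union> fsupp y"
  have S: "finite ?S" "fsupp x \<subseteq> ?S" "fsupp y \<subseteq> ?S" "fsupp (x + y) \<subseteq> ?S"
    using assms by (auto simp: fsupp_def)
  show ?thesis
    by (simp only: pairing_superset[OF S(1)] S(2-4)) (simp add: sum.distrib algebra_simps)
qed

lemma pairing_smulf: "pairing w (smulf c x) = c * pairing w x"
proof (cases "c = 0")
  case False
  then have "fsupp (smulf c x) = fsupp x" by (auto simp: fsupp_def smulf_def)
  then show ?thesis by (simp add: pairing_def smulf_def sum_distrib_left mult.assoc)
qed (simp add: pairing_def smulf_def fsupp_def)

lemma pairing_diff: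
  "finite (fsupp x) \<Longrightarrow> finite (fsupp y) \<Longrightarrow> pairing w (x - y) = pairing w x - pairing w y"
  by (simp only: diff_eq_add_smulf pairing_add finite_fsupp_smulf pairing_smulf) simp

lemma fsupp_tpure: "fsupp (tpure a b :: _ \<Rightarrow> 'f::zero_neq_one) = {(a, b)}"
  by (auto simp: fsupp_def tpure_def monw_def)

lemma pairing_tpure: "pairing w (tpure a b) = w (a, b)"
  by (simp add: pairing_def fsupp_tpure) (simp add: tpure_def monw_def)

lemma finite_fsupp_diff:
  "finite (fsupp x) \<Longrightarrow> finite (fsupp y) \<Longrightarrow> finite (fsupp (x - (y :: 'p \<Rightarrow> 'f::ring_1)))"
  by (rule finite_subset[of _ "fsupp x \<union> fsupp y"]) (auto simp: fsupp_def)

lemma tens_rel_pairing_product: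
  fixes sR :: "'f::field \<Rightarrow> 'r::ring \<Rightarrow> 'r" and sC :: "'f \<Rightarrow> 'c::ring \<Rightarrow> 'c"
  assumes \<phi>: "\<forall>a b. \<phi> (a + b) = \<phi> a + \<phi> b" "\<forall>c a. \<phi> (sR c a) = c * \<phi> a"
    and \<psi>: "\<forall>a b. \<psi> (a + b) = \<psi> a + \<psi> b" "\<forall>c a. \<psi> (sC c a) = c * \<psi> a"
    and z: "z \<in> tens_rel sR sC"
  shows "finite (fsupp z) \<and> pairing (\<lambda>p. \<phi> (fst p) * \<psi> (snd p)) z = 0"
  using z
proof induction
  case zero
  then show ?case by (simp add: pairing_def fsupp_def)
next
  case (add x y)
  have "fsupp (x + y) \<subseteq> fsupp x \<union> fsupp y" by (auto simp: fsupp_def)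
  then have "finite (fsupp (x + y))" using add.IH by (meson finite_UnI finite_subset)
  then show ?case using add.IH by (simp only: pairing_add) simp
next
  case (smul x a)
  then show ?case by (simp add: pairing_smulf finite_fsupp_smulf)
qed (simp_all only: pairing_diff finite_fsupp_diff fsupp_tpure finite_fsupp_smulf pairing_tpure
    pairing_smulf finite.emptyI finite.insertI fst_conv snd_conv,
    simp_all add: \<phi> \<psi> algebra_simps)

lemma tpure_in_tens_rel_imp_zero:
  fixes sR :: "'f::field \<Rightarrow> 'r::ring \<Rightarrow> 'r" and sC :: "'f \<Rightarrow> 'c::ring \<Rightarrow> 'c"
  assumes "vector_space sR" "vector_space sC" "tpure x y \<in> tens_rel sR sC" "y \<noteq> 0"
  shows "x = 0"
proof (rule ccontr)
  assume "x \<noteq> 0"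
  then obtain \<phi> where \<phi>: "\<forall>a b. \<phi> (a + b) = \<phi> a + \<phi> b" "\<forall>c a. \<phi> (sR c a) = c * \<phi> a" "\<phi> x = 1"
    using exists_linear_functional_eq_one[OF assms(1)] by blast
  obtain \<psi> where \<psi>: "\<forall>a b. \<psi> (a + b) = \<psi> a + \<psi> b" "\<forall>c a. \<psi> (sC c a) = c * \<psi> a" "\<psi> y = 1"
    using exists_linear_functional_eq_one[OF assms(2,4)] by blast
  have "pairing (\<lambda>p. \<phi> (fst p) * \<psi> (snd p)) (tpure x y) = 0"
    using tens_rel_pairing_product[OF \<phi>(1,2) \<psi>(1,2) assms(3)] by blast
  then show False by (simp add: pairing_tpure \<phi>(3) \<psi>(3))
qed

lemma tens_rel_sum: "(\<And>a. a \<in> A \<Longrightarrow> F a \<in> tens_rel sR sC) \<Longrightarrow> sum F A \<in> tens_rel sR sC"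
  by (induction A rule: infinite_finite_induct) (auto intro: tens_rel.zero tens_rel.add)

lemma tpure_zero_in_tens_rel: "tpure (0::'r::ring) c \<in> tens_rel sR (sC :: 'f::field \<Rightarrow> 'c::ring \<Rightarrow> 'c)"
proof -
  have "smulf (-1) (tpure (0 + 0) c - tpure 0 c - tpure 0 c) \<in> tens_rel sR sC"
    by (intro tens_rel.smul tens_rel.addL)
  moreover have "smulf (-1) (tpure (0 + 0) c - tpure 0 c - tpure 0 c) = (tpure (0::'r) c :: _ \<Rightarrow> 'f)"
    by (rule ext) (simp add: smulf_def)
  ultimately show ?thesis by simp
qed

lemma tpure_sum_in_tens_rel:
  fixes sR :: "'f::field \<Rightarrow> 'r::ring \<Rightarrow> 'r" and sC :: "'f \<Rightarrow> 'c::ring \<Rightarrow> 'c"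
  shows "tpure (sum Y A) c - (\<Sum>j\<in>A. tpure (Y j) c) \<in> tens_rel sR sC"
proof (induction A rule: infinite_finite_induct)
  case (insert x A)
  have "tpure (sum Y (insert x A)) c - (\<Sum>j\<in>insert x A. tpure (Y j) c)
      = (tpure (Y x + sum Y A) c - tpure (Y x) c - tpure (sum Y A) c)
        + (tpure (sum Y A) c - (\<Sum>j\<in>A. tpure (Y j) c) :: 'r \<times> 'c \<Rightarrow> 'f)"
    by (simp only: sum.insert[OF insert.hyps]) (simp add: algebra_simps)
  also have "\<dots> \<in> tens_rel sR sC"
    by (intro tens_rel.add tens_rel.addL insert.IH)
  finally show ?case .
qed (simp_all add: tpure_zero_in_tens_rel)

lemma tpure_scale_scale_in_tens_rel:
  fixes sR :: "'f::field \<Rightarrow> 'r::ring \<Rightarrow> 'r" and sC :: "'f \<Rightarrow> 'c::ring \<Rightarrow> 'c"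
  shows "tpure (sR a x) (sC b y) - smulf (a * b) (tpure x y) \<in> tens_rel sR sC"
proof -
  have "tpure (sR a x) (sC b y) - smulf (a * b) (tpure x y)
      = (tpure (sR a x) (sC b y) - smulf a (tpure x (sC b y)))
        + smulf a (tpure x (sC b y) - smulf b (tpure x y))"
    by (rule ext) (simp add: smulf_def algebra_simps)
  also have "\<dots> \<in> tens_rel sR sC"
    by (intro tens_rel.add tens_rel.smul tens_rel.smulL tens_rel.smulR)
  finally show ?thesis .
qed

lemma tmul_tpure: "tmul (tpure a b :: ('r::ring \<times> 'c::ring) \<Rightarrow> 'f::field) (tpure a' b') = tpure (a * a') (b * b')"
  unfolding tmul_def fsupp_tpure by (simp add: tpure_def monw_def smulf_def)

lemma gwprod_tmul_tpure:
  "w \<noteq> [] \<Longrightarrow> gwprod tmul (\<lambda>x. tpure (r x) (c x) :: ('r::ring \<times> 'c::ring) \<Rightarrow> 'f::field) w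
     = tpure (gwprod (*) r w) (gwprod (*) c w)"
  by (induction w rule: induct_list012) (auto simp: tmul_tpure)

lemma gwprod_map: "gwprod m s (map f w) = gwprod m (\<lambda>x. s (f x)) w"
  by (induction w rule: induct_list012) auto

section \<open>The preimage under phi_h\<close>

lemma sum_fun_apply: "(sum F A) v = (\<Sum>a\<in>A. F a v)"
  by (induction A rule: infinite_finite_induct) auto

lemma fsupp_expansion:
  fixes f :: "'w \<Rightarrow> 'f::ring_1"
  assumes "finite (fsupp f)"
  shows "(\<Sum>v\<in>fsupp f. smulf (f v) (monw v)) = f"
proof (rule ext)
  fix x
  have "(\<Sum>v\<in>fsupp f. smulf (f v) (monw v)) x = (\<Sum>v\<in>fsupp f. if v = x then f v else 0)"
    unfolding sum_fun_apply smulf_def monw_def by (rule sum.cong) auto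
  also have "\<dots> = f x"
    using assms by (simp add: fsupp_def)
  finally show "(\<Sum>v\<in>fsupp f. smulf (f v) (monw v)) x = f x" .
qed

lemma Pml_0_eq_0: "f \<in> free_alg \<Longrightarrow> f \<in> Pml 0 g \<Longrightarrow> f = 0"
  by (rule ext) (auto simp: free_alg_def Pml_def perm_word_def fsupp_def)

lemma fst_proj_lift_word: "map (\<lambda>((a, b), i). (a, i)) (lift_word h w) = w"
  by (induction w) (auto simp: lift_word_def)

lemma inj_lift_word: "inj (lift_word h)"
  by (metis injI fst_proj_lift_word)

lemma lift_word_perm_word: "lift_word h (perm_word n g \<sigma>) = perm_word n (\<lambda>i. (g i, h i)) \<sigma>"
  by (simp add: lift_word_def perm_word_def)

definition perm_words :: "nat \<Rightarrow> (nat \<Rightarrow> 'k) \<Rightarrow> ('k \<times> nat) list set" where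
  "perm_words n g = {perm_word n g \<sigma> | \<sigma>. \<sigma> permutes {1..n}}"

lemma perm_words_eq_image: "perm_words n g = perm_word n g ` {\<sigma>. \<sigma> permutes {1..n}}"
  by (auto simp: perm_words_def)

lemma finite_perm_words: "finite (perm_words n g)"
  using finite_permutations[of "{1..n}"] by (simp add: perm_words_eq_image)

lemma lift_word_image_perm_words:
  "lift_word h ` perm_words n g = perm_words n (\<lambda>i. (g i, h i))"
  by (simp add: perm_words_eq_image image_image lift_word_perm_word)

lemma Pml_iff_perm_words: "f \<in> Pml n g \<longleftrightarrow> finite (fsupp f) \<and> fsupp f \<subseteq> perm_words n g"
  by (simp add: Pml_def perm_words_def)

text \<open>The candidate preimage of f under phi_h; x / 0 = 0 makes it total, and
  zeta_coef_perm_word shows that no division by zero occurs.\<close>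

definition phi_preimage :: "('h::ab_group_add \<Rightarrow> 'h \<Rightarrow> 'f::field) \<Rightarrow> (nat \<Rightarrow> 'h) \<Rightarrow> nat \<Rightarrow> (nat \<Rightarrow> 'g)
    \<Rightarrow> ((('g \<times> 'h) \<times> nat) list \<Rightarrow> 'f) \<Rightarrow> (('g \<times> nat) list \<Rightarrow> 'f)" where
  "phi_preimage \<beta> h n g f = (\<lambda>w. if w \<in> perm_words n g
     then f (lift_word h w) / zeta_coef \<beta> (lift_word h w) else 0)"

lemma phi_preimage_in_Pml: "phi_preimage \<beta> h n g f \<in> Pml n g"
proof -
  have "fsupp (phi_preimage \<beta> h n g f) \<subseteq> perm_words n g"
    by (auto simp: fsupp_def phi_preimage_def)
  then show ?thesis
    using finite_perm_words by (auto simp: Pml_iff_perm_words intro: finite_subset)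
qed

context
  fixes \<beta> :: "'h::ab_group_add \<Rightarrow> 'h \<Rightarrow> 'f::field" and h :: "nat \<Rightarrow> 'h" and n :: nat and g :: "nat \<Rightarrow> 'g"
    and f :: "(('g \<times> 'h) \<times> nat) list \<Rightarrow> 'f"
  assumes f: "f \<in> Pml n (\<lambda>i. (g i, h i))"
    and zeta_nonzero: "\<And>w. w \<in> perm_words n g \<Longrightarrow> zeta_coef \<beta> (lift_word h w) \<noteq> 0"
begin

lemma phi_preimage_lift_word:
  "w \<in> perm_words n g \<Longrightarrow> phi_preimage \<beta> h n g f w * zeta_coef \<beta> (lift_word h w) = f (lift_word h w)"
  using zeta_nonzero by (simp add: phi_preimage_def)

lemma fsupp_eq_lift_word_image: "fsupp f = lift_word h ` fsupp (phi_preimage \<beta> h n g f)"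
proof -
  have "fsupp f \<subseteq> lift_word h ` perm_words n g"
    using f by (simp add: Pml_iff_perm_words lift_word_image_perm_words)
  then show ?thesis
    using zeta_nonzero by (auto simp: fsupp_def phi_preimage_def image_iff)
qed

lemma phi_phi_preimage: "phi \<beta> h (phi_preimage \<beta> h n g f) = f"
proof -
  let ?f0 = "phi_preimage \<beta> h n g f"
  have supp: "fsupp ?f0 \<subseteq> perm_words n g"
    using phi_preimage_in_Pml[of \<beta> h n g f] by (simp add: Pml_iff_perm_words)
  have "phi \<beta> h ?f0 = (\<Sum>w\<in>fsupp ?f0. smulf (f (lift_word h w)) (monw (lift_word h w)))"
    unfolding phi_def zeta_def
    by (intro sum.cong refl) (use supp in \<open>auto simp: fun_eq_iff smulf_def phi_preimage_lift_word[symmetric]\<close>)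
  also have "\<dots> = (\<Sum>v\<in>fsupp f. smulf (f v) (monw v))"
    unfolding fsupp_eq_lift_word_image
    by (rule sum.reindex[symmetric, unfolded comp_def]) (rule inj_on_subset[OF inj_lift_word], simp)
  also have "\<dots> = f"
    using f by (simp add: fsupp_expansion Pml_iff_perm_words)
  finally show ?thesis .
qed

end

definition tensor_subst :: "('g \<times> nat \<Rightarrow> 'r) \<Rightarrow> ('h \<times> nat \<Rightarrow> 'c) \<Rightarrow> ('g \<times> 'h) \<times> nat \<Rightarrow> ('r \<times> 'c \<Rightarrow> 'f::field)" where
  "tensor_subst r c = (\<lambda>((a, b), i). tpure (r (a, i)) (c (b, i)))"

lemma graded_subst_tensor_subst:
  "graded_subst Rg r \<Longrightarrow> graded_subst Cg c \<Longrightarrow> graded_subst (tens_comp Rg Cg) (tensor_subst r c)"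
  by (auto simp: graded_subst_def tens_comp_def tensor_subst_def fsupp_tpure)

lemma gwprod_tensor_subst_perm_word:
  assumes "1 \<le> n"
  shows "gwprod tmul (tensor_subst r c) (lift_word h (perm_word n g \<sigma>))
    = tpure (gwprod (*) r (perm_word n g \<sigma>)) (gwprod (*) c (perm_word n h \<sigma>))"
proof -
  have ne: "lift_word h (perm_word n g \<sigma>) \<noteq> []"
    using perm_word_ne_Nil[OF assms] by (simp add: lift_word_def)
  have e: "tensor_subst r c = (\<lambda>x. tpure (r ((\<lambda>((a, b), i). (a, i)) x)) (c ((\<lambda>((a, b), i). (b, i)) x)))"
    by (auto simp: fun_eq_iff tensor_subst_def)
  show ?thesis
    unfolding e gwprod_tmul_tpure[OF ne] gwprod_map[symmetric] fst_proj_lift_word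
    by (simp only: proj_lift_perm_word)
qed
lemma Pml_subset_free_alg:
  assumes "1 \<le> n" "p \<in> Pml n g"
  shows "p \<in> free_alg"
proof -
  have "[] \<notin> perm_words n g"
    using assms(1) by (auto simp: perm_words_def perm_word_def)
  then show ?thesis using assms(2) by (auto simp: Pml_iff_perm_words free_alg_def fsupp_def)
qed

lemma zeta_coef_perm_words_nonzero:
  fixes sC :: "'f::field \<Rightarrow> 'c::ring \<Rightarrow> 'c" and \<beta> :: "'h::ab_group_add \<Rightarrow> 'h \<Rightarrow> 'f"
  assumes "graded_algebra sC Cg" "beta_commutative \<beta> sC Cg" "bicharacter \<beta>"
    "generates_beta_variety \<beta> sC Cg" "1 \<le> n" "w \<in> perm_words n g"
  shows "zeta_coef \<beta> (lift_word h w) \<noteq> 0"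
  using assms zeta_coef_perm_word(1)[OF assms(1-5)] by (auto simp: perm_words_def)

lemma exists_subst_gwprod_sorted_nonzero:
  fixes sC :: "'f::field \<Rightarrow> 'c::ring \<Rightarrow> 'c" and \<beta> :: "'h::ab_group_add \<Rightarrow> 'h \<Rightarrow> 'f"
  assumes GA: "graded_algebra sC Cg" and B: "bicharacter \<beta>"
    and GEN: "generates_beta_variety \<beta> sC Cg" and n: "1 \<le> n"
  shows "\<exists>c. graded_subst Cg c \<and> gwprod (*) c (perm_word n h id) \<noteq> 0"
proof -
  interpret assoc_algebra "(*)" sC by (rule graded_algebra_assoc_algebra[OF GA])
  have "(monw (perm_word n h id) :: _ \<Rightarrow> 'f) \<notin> TG sC Cg"
    using sorted_monomial_notin_beta_comm_Tideal[OF B n] GEN by (simp add: generates_beta_variety_def)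
  then show ?thesis
    using monw_in_free_alg[OF perm_word_ne_Nil[OF n]] by (auto simp: TG_def geval_monw)
qed

lemma gwprod_sorted_eq_scale_zeta_coef:
  fixes sC :: "'f::field \<Rightarrow> 'c::ring \<Rightarrow> 'c" and \<beta> :: "'h::ab_group_add \<Rightarrow> 'h \<Rightarrow> 'f"
    and g :: "nat \<Rightarrow> 'g"
  assumes GA: "graded_algebra sC Cg" and BC: "beta_commutative \<beta> sC Cg" and B: "bicharacter \<beta>"
    and GEN: "generates_beta_variety \<beta> sC Cg" and n: "1 \<le> n" and \<sigma>: "\<sigma> permutes {1..n}"
    and c: "graded_subst Cg c"
  shows "gwprod (*) c (perm_word n h id)
    = sC (zeta_coef \<beta> (lift_word h (perm_word n g \<sigma>))) (gwprod (*) c (perm_word n h \<sigma>))"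
proof -
  interpret assoc_algebra "(*)" sC by (rule graded_algebra_assoc_algebra[OF GA])
  let ?z = "zeta_coef \<beta> (lift_word h (perm_word n g \<sigma>))"
  have "monw (perm_word n h id) - smulf ?z (monw (perm_word n h \<sigma>)) \<in> TG sC Cg"
    using zeta_coef_perm_word(2)[OF GA BC B GEN n \<sigma>] GEN by (simp add: generates_beta_variety_def)
  then have "geval (*) sC c (monw (perm_word n h id) - smulf ?z (monw (perm_word n h \<sigma>))) = 0"
    using c by (simp add: TG_def)
  moreover have "finite (fsupp (monw (perm_word n h \<tau>) :: _ \<Rightarrow> 'f))" for \<tau>
    by (rule free_algD[OF monw_in_free_alg[OF perm_word_ne_Nil[OF n]]])
  ultimately show ?thesis
    by (simp add: geval_diff geval_smulf geval_monw finite_fsupp_smulf)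
qed

text \<open>Evaluated in C, each monomial of f is its zeta coefficient times the sorted product, and
  that coefficient is exactly the one phi_h attaches to the monomial.\<close>

lemma geval_tensor_subst_phi_preimage:
  fixes sR :: "'f::field \<Rightarrow> 'r::ring \<Rightarrow> 'r" and sC :: "'f \<Rightarrow> 'c::ring \<Rightarrow> 'c"
    and \<beta> :: "'h::ab_group_add \<Rightarrow> 'h \<Rightarrow> 'f" and g :: "nat \<Rightarrow> 'g"
  assumes GA: "graded_algebra sC Cg" and BC: "beta_commutative \<beta> sC Cg" and B: "bicharacter \<beta>"
    and GEN: "generates_beta_variety \<beta> sC Cg" and n: "1 \<le> n"
    and f: "f \<in> Pml n (\<lambda>i. (g i, h i))" and c: "graded_subst Cg c"
  defines "f0 \<equiv> phi_preimage \<beta> h n g f"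
  shows "tpure (geval (*) sR r f0) (gwprod (*) c (perm_word n h id))
    - geval tmul smulf (tensor_subst r c) f \<in> tens_rel sR sC"
proof -
  let ?\<gamma> = "gwprod (*) c (perm_word n h id)" and ?ts = "tensor_subst r c"
  let ?Y = "\<lambda>w. sR (f0 w) (gwprod (*) r w)"
  note zeta_nonzero = zeta_coef_perm_words_nonzero[OF GA BC B GEN n]
  have supp: "fsupp f0 \<subseteq> perm_words n g"
    using phi_preimage_in_Pml[of \<beta> h n g f] by (simp add: f0_def Pml_iff_perm_words)
  have fsupp_f: "fsupp f = lift_word h ` fsupp f0"
    unfolding f0_def by (rule fsupp_eq_lift_word_image[OF f zeta_nonzero])
  have "geval tmul smulf ?ts f = (\<Sum>w\<in>fsupp f0. smulf (f (lift_word h w)) (gwprod tmul ?ts (lift_word h w)))"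
    unfolding geval_def fsupp_f by (rule sum.reindex[unfolded comp_def]) (rule inj_on_subset[OF inj_lift_word], simp)
  then have "tpure (geval (*) sR r f0) ?\<gamma> - geval tmul smulf ?ts f
      = (tpure (sum ?Y (fsupp f0)) ?\<gamma> - (\<Sum>w\<in>fsupp f0. tpure (?Y w) ?\<gamma>))
        + (\<Sum>w\<in>fsupp f0. tpure (?Y w) ?\<gamma> - smulf (f (lift_word h w)) (gwprod tmul ?ts (lift_word h w)))"
    by (simp add: geval_def sum_subtractf)
  also have "\<dots> \<in> tens_rel sR sC"
  proof (intro tens_rel.add tpure_sum_in_tens_rel tens_rel_sum)
    fix w assume "w \<in> fsupp f0"
    then obtain \<sigma> where \<sigma>: "\<sigma> permutes {1..n}" and w: "w = perm_word n g \<sigma>"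
      using supp by (auto simp: perm_words_def)
    let ?z = "zeta_coef \<beta> (lift_word h w)"
    have "f (lift_word h w) = f0 w * ?z"
      using phi_preimage_lift_word[OF f zeta_nonzero] supp \<open>w \<in> fsupp f0\<close> by (auto simp: f0_def)
    moreover have "?\<gamma> = sC ?z (gwprod (*) c (perm_word n h \<sigma>))"
      unfolding w by (rule gwprod_sorted_eq_scale_zeta_coef[OF GA BC B GEN n \<sigma> c])
    ultimately show "tpure (?Y w) ?\<gamma> - smulf (f (lift_word h w)) (gwprod tmul ?ts (lift_word h w))
        \<in> tens_rel sR sC"
      unfolding w gwprod_tensor_subst_perm_word[OF n] by (simp add: tpure_scale_scale_in_tens_rel)
  qed
  finally show ?thesis .
qed

lemma phi_preimage_in_TG:
  fixes sR :: "'f::field \<Rightarrow> 'r::ring \<Rightarrow> 'r" and sC :: "'f \<Rightarrow> 'c::ring \<Rightarrow> 'c"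
    and \<beta> :: "'h::ab_group_add \<Rightarrow> 'h \<Rightarrow> 'f" and g :: "nat \<Rightarrow> 'g::monoid_add"
  assumes GAC: "graded_algebra sC Cg" and BC: "beta_commutative \<beta> sC Cg" and B: "bicharacter \<beta>"
    and GEN: "generates_beta_variety \<beta> sC Cg" and GAR: "graded_algebra sR Rg" and n: "1 \<le> n"
    and fT: "f \<in> TG_tensor sR Rg sC Cg" and fP: "f \<in> Pml n (\<lambda>i. (g i, h i))"
  shows "phi_preimage \<beta> h n g f \<in> TG sR Rg"
  unfolding TG_def
proof (intro CollectI conjI allI impI)
  show "phi_preimage \<beta> h n g f \<in> free_alg"
    by (rule Pml_subset_free_alg[OF n phi_preimage_in_Pml])
  fix r assume r: "graded_subst Rg r"
  obtain c where c: "graded_subst Cg c" and \<gamma>: "gwprod (*) c (perm_word n h id) \<noteq> 0"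
    using exists_subst_gwprod_sorted_nonzero[OF GAC B GEN n] by blast
  let ?X = "geval (*) sR r (phi_preimage \<beta> h n g f)" and ?E = "geval tmul smulf (tensor_subst r c) f"
  have "?E \<in> tens_rel sR sC"
    using fT graded_subst_tensor_subst[OF r c] unfolding TG_tensor_def by blast
  then have "(tpure ?X (gwprod (*) c (perm_word n h id)) - ?E) + ?E \<in> tens_rel sR sC"
    by (intro tens_rel.add geval_tensor_subst_phi_preimage[OF GAC BC B GEN n fP c])
  moreover have "vector_space sR" "vector_space sC"
    using GAR GAC by (simp_all add: graded_algebra_def)
  ultimately show "?X = 0"
    using tpure_in_tens_rel_imp_zero \<gamma> by auto
qed

theorem mainTheorem8:
  fixes sR :: "'f::field_char_0 \<Rightarrow> 'r::ring \<Rightarrow> 'r" and Rg :: "'g::group_add \<Rightarrow> 'r set"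
    and sC :: "'f \<Rightarrow> 'c::ring \<Rightarrow> 'c" and Cg :: "'h::ab_group_add \<Rightarrow> 'c set"
    and \<beta> :: "'h \<Rightarrow> 'h \<Rightarrow> 'f"
    and n :: nat and g :: "nat \<Rightarrow> 'g" and h :: "nat \<Rightarrow> 'h"
    and f :: "((('g \<times> 'h) \<times> nat) list \<Rightarrow> 'f)"
  assumes "bicharacter \<beta>"
    and "graded_algebra sC Cg" and "beta_commutative \<beta> sC Cg"
    and "generates_beta_variety \<beta> sC Cg"
    and "graded_algebra sR Rg"
    and "f \<in> TG_tensor sR Rg sC Cg" and "f \<in> Pml n (\<lambda>i. (g i, h i))"
  shows "\<exists>f0. f0 \<in> Pml n g \<and> f0 \<in> TG sR Rg \<and> f = phi \<beta> h f0"
proof (cases "n = 0")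
  case True
  have "f = 0"
    using assms(6,7) True by (intro Pml_0_eq_0) (simp_all add: TG_tensor_def)
  then show ?thesis
    by (intro exI[of _ 0]) (simp add: Pml_def TG_def phi_def geval_def fsupp_def zero_in_free_alg)
next
  case False
  then have n: "1 \<le> n" by simp
  have "phi \<beta> h (phi_preimage \<beta> h n g f) = f"
    using assms(7) zeta_coef_perm_words_nonzero[OF assms(2,3,1,4) n] by (rule phi_phi_preimage)
  then show ?thesis
    using phi_preimage_in_Pml phi_preimage_in_TG[OF assms(2,3,1,4,5) n assms(6,7)] by metis
qed

end
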